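(* Let $E_1,E_2$ be nonempty bounded subsets of $M_a$ and $f:E_1\to E_2$ a surjective $d_a$-isometry; let $p\in E_1$ and $q=f(p)$. Let $F:\mathrm{GS}(E_1,p)\to M_a$ be the map $F\big(p+\sum_i\alpha_i(x_i-p)\big)=q+\sum_i\alpha_i(f(x_i)-q)$ ($x_i\in E_1$, $\alpha_i\in\mathbb R$, $\sum_i\alpha_i(x_i-p)\in M_a$). Then $F(\mathrm{GS}(E_1,p))=\mathrm{GS}(E_2,q)$.
   Context: Let $a=\{a_i\}$ be a sequence of positive reals with $\sum_i a_i^2<\infty$, $M_a=\{x\in\mathbb{R}^{\mathbb N}:\sum_i a_i^2x_i^2<\infty\}$ with inner product $\langle x,y\rangle_a=\sum_i a_i^2x_iy_i$, norm $\|\cdot\|_a$ and metric $d_a(x,y)=\|x-y\|_a$; a $d_a$-isometry is a map preserving $d_a$. Sums are indexed by finite or countable subsets of $\mathbb N$; infinite sums are $\|\cdot\|_a$-limits of partial sums. For $p\in E\subset M_a$, $\mathrm{GS}(E,p)=\{p+\sum_i\alpha_i(x_i-p)\in M_a: x_i\in E,\ \alpha_i\in\mathbb R\}$. (The map $F$ is well defined and is a $d_a$-isometry extending $f$.) *)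

theory Defs
  imports "HOL-Analysis.Analysis"
begin

definition Ma :: "(nat \<Rightarrow> real) \<Rightarrow> (nat \<Rightarrow> real) set" where
  "Ma a = {x. summable (\<lambda>i. (a i)^2 * (x i)^2)}"

definition norm_a :: "(nat \<Rightarrow> real) \<Rightarrow> (nat \<Rightarrow> real) \<Rightarrow> real" where
  "norm_a a x = sqrt (\<Sum>i. (a i)^2 * (x i)^2)"

definition d_a :: "(nat \<Rightarrow> real) \<Rightarrow> (nat \<Rightarrow> real) \<Rightarrow> (nat \<Rightarrow> real) \<Rightarrow> real" where
  "d_a a x y = norm_a a (\<lambda>i. x i - y i)"

definition bounded_a :: "(nat \<Rightarrow> real) \<Rightarrow> (nat \<Rightarrow> real) set \<Rightarrow> bool" where
  "bounded_a a E \<longleftrightarrow> (\<exists>c. \<forall>x\<in>E. \<forall>y\<in>E. d_a a x y \<le> c)"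

definition conv_a :: "(nat \<Rightarrow> real) \<Rightarrow> (nat \<Rightarrow> nat \<Rightarrow> real) \<Rightarrow> (nat \<Rightarrow> real) \<Rightarrow> bool" where
  "conv_a a S s \<longleftrightarrow> s \<in> Ma a \<and> (\<lambda>n. d_a a (S n) s) \<longlonglongrightarrow> 0"

text \<open>Partial sums of sum_i alpha_i (x_i - p).  Finite / countable index sets are
  encoded by sequences, padding with zero coefficients.\<close>
definition psum :: "(nat \<Rightarrow> real) \<Rightarrow> (nat \<Rightarrow> nat \<Rightarrow> real) \<Rightarrow> (nat \<Rightarrow> real) \<Rightarrow> nat \<Rightarrow> nat \<Rightarrow> real" where
  "psum \<alpha> x p n = (\<lambda>k. \<Sum>i<n. \<alpha> i * (x i k - p k))"

definition GS :: "(nat \<Rightarrow> real) \<Rightarrow> (nat \<Rightarrow> real) set \<Rightarrow> (nat \<Rightarrow> real) \<Rightarrow> (nat \<Rightarrow> real) set" where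
  "GS a E p = {y. y \<in> Ma a \<and> (\<exists>x \<alpha> s. (\<forall>i. x i \<in> E) \<and> conv_a a (psum \<alpha> x p) s
                 \<and> y = (\<lambda>k. p k + s k))}"

definition Fmap :: "(nat \<Rightarrow> real) \<Rightarrow> ((nat \<Rightarrow> real) \<Rightarrow> (nat \<Rightarrow> real)) \<Rightarrow> (nat \<Rightarrow> real) set
     \<Rightarrow> (nat \<Rightarrow> real) \<Rightarrow> (nat \<Rightarrow> real) \<Rightarrow> (nat \<Rightarrow> real)" where
  "Fmap a f E p y = (THE z. \<exists>x \<alpha> s t. (\<forall>i. x i \<in> E) \<and> conv_a a (psum \<alpha> x p) s
        \<and> y = (\<lambda>k. p k + s k)
        \<and> conv_a a (psum \<alpha> (\<lambda>i. f (x i)) (f p)) t \<and> z = (\<lambda>k. f p k + t k))"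

end

theory Submission
  imports Defs
begin

(* Since f preserves distances, polarization shows that x - p |-> f x - f p preserves the
   inner product of M_a, hence the norm of every finite linear combination. So for any two
   representations, the distances between partial sums of sum alpha_i (x_i - p) and of
   sum beta_i (y_i - p) equal those between the corresponding partial sums on the image side.
   By completeness of M_a one series converges iff its image does, and two representations
   of the same point have images with the same limit, so F is well defined; surjectivity of f
   lifts every representation over E2 to one over E1. *)

definition inner_a :: "(nat \<Rightarrow> real) \<Rightarrow> (nat \<Rightarrow> real) \<Rightarrow> (nat \<Rightarrow> real) \<Rightarrow> real" where
  "inner_a a x y = (\<Sum>i. (a i)^2 * x i * y i)"

lemma summable_inner_a:
  assumes "x \<in> Ma a" "y \<in> Ma a"
  shows "summable (\<lambda>i. (a i)^2 * x i * y i)"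
proof (rule summable_comparison_test')
  show "summable (\<lambda>i. (a i)^2 * (x i)^2 + (a i)^2 * (y i)^2)"
    using assms unfolding Ma_def by (intro summable_add) auto
  fix i
  have "2 * \<bar>x i\<bar> * \<bar>y i\<bar> \<le> (x i)^2 + (y i)^2"
    using sum_squares_bound[of "\<bar>x i\<bar>" "\<bar>y i\<bar>"] by simp
  moreover have "0 \<le> \<bar>x i\<bar> * \<bar>y i\<bar>"
    by simp
  ultimately have "\<bar>x i * y i\<bar> \<le> (x i)^2 + (y i)^2"
    unfolding abs_mult by linarith
  then show "norm ((a i)^2 * x i * y i) \<le> (a i)^2 * (x i)^2 + (a i)^2 * (y i)^2"
    by (simp add: abs_mult mult.assoc mult_left_mono flip: distrib_left)
qed

lemma Ma_add:
  assumes "x \<in> Ma a" "y \<in> Ma a"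
  shows "(\<lambda>k. x k + y k) \<in> Ma a"
proof -
  have "summable (\<lambda>i. (a i)^2 * (x i)^2 + 2 * ((a i)^2 * x i * y i) + (a i)^2 * (y i)^2)"
    using assms summable_inner_a[OF assms] unfolding Ma_def by (intro summable_add summable_mult) auto
  then show ?thesis
    unfolding Ma_def by (simp add: power2_sum algebra_simps)
qed

lemma Ma_cmult:
  assumes "x \<in> Ma a"
  shows "(\<lambda>k. c * x k) \<in> Ma a"
proof -
  have "summable (\<lambda>i. c^2 * ((a i)^2 * (x i)^2))"
    using assms unfolding Ma_def by (intro summable_mult) auto
  then show ?thesis
    unfolding Ma_def by (simp add: algebra_simps)
qed

lemma Ma_diff:
  assumes "x \<in> Ma a" "y \<in> Ma a"
  shows "(\<lambda>k. x k - y k) \<in> Ma a"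
  using Ma_add[OF assms(1) Ma_cmult[OF assms(2), of "-1"]] by simp

lemma Ma_sum:
  assumes "finite I" "\<And>i. i \<in> I \<Longrightarrow> u i \<in> Ma a"
  shows "(\<lambda>k. \<Sum>i\<in>I. c i * u i k) \<in> Ma a"
  using assms
proof (induction I rule: finite_induct)
  case empty
  then show ?case by (simp add: Ma_def)
next
  case (insert j I)
  then show ?case by (simp add: Ma_add Ma_cmult)
qed

lemma psum_in_Ma:
  assumes "\<And>i. x i \<in> Ma a" "p \<in> Ma a"
  shows "psum \<alpha> x p n \<in> Ma a"
  unfolding psum_def by (intro Ma_sum Ma_diff assms) auto

lemma inner_a_commute: "inner_a a x y = inner_a a y x"
  unfolding inner_a_def by (simp add: algebra_simps)

lemma norm_a_eq_sqrt_inner_a: "norm_a a x = sqrt (inner_a a x x)"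
  unfolding norm_a_def inner_a_def by (simp add: power2_eq_square mult.assoc)

lemma norm_a_nonneg:
  assumes "x \<in> Ma a"
  shows "0 \<le> norm_a a x"
  using assms unfolding norm_a_def Ma_def by (simp add: suminf_nonneg)

lemma norm_a_power2:
  assumes "x \<in> Ma a"
  shows "(norm_a a x)^2 = inner_a a x x"
  using norm_a_nonneg[OF assms] by (simp add: norm_a_eq_sqrt_inner_a)

lemma inner_a_sum_left:
  assumes "finite I" "\<And>i. i \<in> I \<Longrightarrow> u i \<in> Ma a" "w \<in> Ma a"
  shows "inner_a a (\<lambda>k. \<Sum>i\<in>I. c i * u i k) w = (\<Sum>i\<in>I. c i * inner_a a (u i) w)"
proof -
  have "inner_a a (\<lambda>k. \<Sum>i\<in>I. c i * u i k) w = (\<Sum>n. \<Sum>i\<in>I. c i * ((a n)^2 * u i n * w n))"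
    unfolding inner_a_def by (simp add: sum_distrib_left sum_distrib_right algebra_simps)
  also have "\<dots> = (\<Sum>i\<in>I. \<Sum>n. c i * ((a n)^2 * u i n * w n))"
    using assms by (intro suminf_sum summable_mult summable_inner_a) auto
  also have "\<dots> = (\<Sum>i\<in>I. c i * inner_a a (u i) w)"
    unfolding inner_a_def using assms by (intro sum.cong refl suminf_mult summable_inner_a) auto
  finally show ?thesis .
qed

lemma inner_a_sum_sum:
  assumes "finite I" "\<And>i. i \<in> I \<Longrightarrow> u i \<in> Ma a"
  shows "inner_a a (\<lambda>k. \<Sum>i\<in>I. c i * u i k) (\<lambda>k. \<Sum>i\<in>I. c i * u i k)
       = (\<Sum>i\<in>I. c i * (\<Sum>j\<in>I. c j * inner_a a (u i) (u j)))"
proof -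
  let ?v = "\<lambda>k. \<Sum>i\<in>I. c i * u i k"
  have "inner_a a ?v ?v = (\<Sum>i\<in>I. c i * inner_a a (u i) ?v)"
    using assms by (intro inner_a_sum_left Ma_sum)
  also have "\<dots> = (\<Sum>i\<in>I. c i * (\<Sum>j\<in>I. c j * inner_a a (u i) (u j)))"
  proof (intro sum.cong refl arg_cong[where f="(*) (c _)"])
    fix i assume "i \<in> I"
    then show "inner_a a (u i) ?v = (\<Sum>j\<in>I. c j * inner_a a (u i) (u j))"
      using assms by (simp add: inner_a_commute[of a "u i"] inner_a_sum_left)
  qed
  finally show ?thesis .
qed

lemma inner_a_polarization:
  assumes "u \<in> Ma a" "v \<in> Ma a"
  shows "inner_a a u v = ((norm_a a u)^2 + (norm_a a v)^2 - (d_a a u v)^2) / 2"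
proof -
  have inner_sums: "(\<lambda>i. (a i)^2 * x i * y i) sums inner_a a x y" if "x \<in> Ma a" "y \<in> Ma a" for x y
    unfolding inner_a_def using summable_inner_a[OF that] by (rule summable_sums)
  have "(\<lambda>i. (a i)^2 * u i * u i + (a i)^2 * v i * v i - 2 * ((a i)^2 * u i * v i))
          sums (inner_a a u u + inner_a a v v - 2 * inner_a a u v)"
    using assms by (intro sums_diff sums_add sums_mult inner_sums)
  moreover have "(\<lambda>i. (a i)^2 * u i * u i + (a i)^2 * v i * v i - 2 * ((a i)^2 * u i * v i))
               = (\<lambda>i. (a i)^2 * (u i - v i) * (u i - v i))"
    by (rule ext) (simp add: algebra_simps)
  ultimately have "(\<lambda>i. (a i)^2 * (u i - v i) * (u i - v i))
                     sums (inner_a a u u + inner_a a v v - 2 * inner_a a u v)"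
    by simp
  then have "(d_a a u v)^2 = inner_a a u u + inner_a a v v - 2 * inner_a a u v"
    unfolding d_a_def norm_a_power2[OF Ma_diff[OF assms]] inner_a_def by (rule sums_unique[symmetric])
  then show ?thesis
    using assms by (simp add: norm_a_power2)
qed

lemma sum_le_norm_a_power2:
  assumes "x \<in> Ma a" "finite I"
  shows "(\<Sum>i\<in>I. (a i)^2 * (x i)^2) \<le> (norm_a a x)^2"
proof -
  have s: "summable (\<lambda>i. (a i)^2 * (x i)^2)"
    using assms unfolding Ma_def by simp
  have "(\<Sum>i\<in>I. (a i)^2 * (x i)^2) \<le> (\<Sum>i. (a i)^2 * (x i)^2)"
    using assms(2) by (intro sum_le_suminf[OF s]) auto
  also have "\<dots> = (norm_a a x)^2"
    unfolding norm_a_def using suminf_nonneg[OF s] by simp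
  finally show ?thesis .
qed

lemma norm_a_eq_0:
  assumes "\<And>i. a i > 0" "x \<in> Ma a" "norm_a a x = 0"
  shows "x = (\<lambda>k. 0)"
proof -
  have s: "summable (\<lambda>i. (a i)^2 * (x i)^2)"
    using assms unfolding Ma_def by simp
  have "(\<Sum>i. (a i)^2 * (x i)^2) = 0"
    using assms(3) suminf_nonneg[OF s] unfolding norm_a_def by simp
  then have "(a i)^2 * (x i)^2 = 0" for i
    using suminf_eq_zero_iff[OF s] by simp
  then show ?thesis
    using assms(1) by (auto intro!: ext simp: less_le)
qed

lemma norm_a_triangle:
  assumes "u \<in> Ma a" "v \<in> Ma a"
  shows "norm_a a (\<lambda>k. u k + v k) \<le> norm_a a u + norm_a a v"
proof -
  have L2_le: "L2_set (\<lambda>i. a i * w i) {..<n} \<le> norm_a a w" if "w \<in> Ma a" for w n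
  proof -
    have "L2_set (\<lambda>i. a i * w i) {..<n} = sqrt (\<Sum>i<n. (a i)^2 * (w i)^2)"
      unfolding L2_set_def by (simp add: power_mult_distrib)
    also have "\<dots> \<le> sqrt ((norm_a a w)^2)"
      using that by (intro real_sqrt_le_mono sum_le_norm_a_power2) auto
    also have "\<dots> = norm_a a w"
      using norm_a_nonneg[OF that] by simp
    finally show ?thesis .
  qed
  have "(\<Sum>i<n. (a i)^2 * (u i + v i)^2) \<le> (norm_a a u + norm_a a v)^2" for n
  proof -
    have "(\<Sum>i<n. (a i)^2 * (u i + v i)^2) = (L2_set (\<lambda>i. a i * u i + a i * v i) {..<n})^2"
      unfolding L2_set_def by (simp add: sum_nonneg power_mult_distrib flip: distrib_left)
    also have "\<dots> \<le> (L2_set (\<lambda>i. a i * u i) {..<n} + L2_set (\<lambda>i. a i * v i) {..<n})^2"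
      by (intro power_mono L2_set_triangle_ineq L2_set_nonneg)
    also have "\<dots> \<le> (norm_a a u + norm_a a v)^2"
      using assms by (intro power_mono add_mono L2_le add_nonneg_nonneg L2_set_nonneg)
    finally show ?thesis .
  qed
  then have "(\<Sum>i. (a i)^2 * (u i + v i)^2) \<le> (norm_a a u + norm_a a v)^2"
    using Ma_add[OF assms] unfolding Ma_def by (intro suminf_le_const) auto
  then have "norm_a a (\<lambda>k. u k + v k) \<le> sqrt ((norm_a a u + norm_a a v)^2)"
    unfolding norm_a_def by (rule real_sqrt_le_mono)
  also have "\<dots> = norm_a a u + norm_a a v"
    using assms by (simp add: norm_a_nonneg)
  finally show ?thesis .
qed

lemma d_a_commute: "d_a a x y = d_a a y x"
  unfolding d_a_def norm_a_def by (simp add: power2_commute)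

lemma d_a_self [simp]: "d_a a x x = 0"
  unfolding d_a_def norm_a_def by simp

lemma d_a_nonneg:
  assumes "x \<in> Ma a" "y \<in> Ma a"
  shows "0 \<le> d_a a x y"
  unfolding d_a_def by (intro norm_a_nonneg Ma_diff assms)

lemma d_a_triangle:
  assumes "x \<in> Ma a" "y \<in> Ma a" "z \<in> Ma a"
  shows "d_a a x z \<le> d_a a x y + d_a a y z"
proof -
  have "d_a a x z = norm_a a (\<lambda>k. (x k - y k) + (y k - z k))"
    unfolding d_a_def by simp
  also have "\<dots> \<le> d_a a x y + d_a a y z"
    unfolding d_a_def by (intro norm_a_triangle Ma_diff assms)
  finally show ?thesis .
qed

lemma d_a_eq_0_imp_eq:
  assumes "\<And>i. a i > 0" "x \<in> Ma a" "y \<in> Ma a" "d_a a x y = 0"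
  shows "x = y"
  using norm_a_eq_0[OF assms(1) Ma_diff[OF assms(2,3)]] assms(4)
  unfolding d_a_def by (simp add: fun_eq_iff)

lemma coord_le_d_a:
  assumes "x \<in> Ma a" "y \<in> Ma a"
  shows "a k * \<bar>x k - y k\<bar> \<le> d_a a x y"
proof (rule power2_le_imp_le)
  have "(\<Sum>i\<in>{k}. (a i)^2 * (x i - y i)^2) \<le> (d_a a x y)^2"
    unfolding d_a_def using assms by (intro sum_le_norm_a_power2 Ma_diff) auto
  then show "(a k * \<bar>x k - y k\<bar>)^2 \<le> (d_a a x y)^2"
    by (simp add: power_mult_distrib)
  show "0 \<le> d_a a x y"
    using assms by (rule d_a_nonneg)
qed

lemma tendsto_d_a:
  assumes "\<And>n. S n \<in> Ma a" "\<And>n. T n \<in> Ma a" "conv_a a S s" "conv_a a T t"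
  shows "(\<lambda>n. d_a a (S n) (T n)) \<longlonglongrightarrow> d_a a s t"
proof (rule LIM_zero_cancel, rule Lim_null_comparison)
  have s: "s \<in> Ma a" "(\<lambda>n. d_a a (S n) s) \<longlonglongrightarrow> 0"
    and t: "t \<in> Ma a" "(\<lambda>n. d_a a (T n) t) \<longlonglongrightarrow> 0"
    using assms(3,4) unfolding conv_a_def by auto
  show "(\<lambda>n. d_a a (S n) s + d_a a (T n) t) \<longlonglongrightarrow> 0"
    using tendsto_add[OF s(2) t(2)] by simp
  show "\<forall>\<^sub>F n in sequentially. norm (d_a a (S n) (T n) - d_a a s t) \<le> d_a a (S n) s + d_a a (T n) t"
  proof (intro always_eventually allI)
    fix n
    have "d_a a (S n) (T n) \<le> d_a a (S n) s + d_a a s (T n)"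
      by (rule d_a_triangle[OF assms(1) s(1) assms(2)])
    moreover have "d_a a s (T n) \<le> d_a a s t + d_a a t (T n)"
      by (rule d_a_triangle[OF s(1) t(1) assms(2)])
    moreover have "d_a a s t \<le> d_a a s (S n) + d_a a (S n) t"
      by (rule d_a_triangle[OF s(1) assms(1) t(1)])
    moreover have "d_a a (S n) t \<le> d_a a (S n) (T n) + d_a a (T n) t"
      by (rule d_a_triangle[OF assms(1) assms(2) t(1)])
    moreover have "d_a a s (S n) = d_a a (S n) s" "d_a a t (T n) = d_a a (T n) t"
      by (rule d_a_commute)+
    ultimately show "norm (d_a a (S n) (T n) - d_a a s t) \<le> d_a a (S n) s + d_a a (T n) t"
      unfolding real_norm_def abs_le_iff by linarith
  qed
qed

definition Cauchy_a :: "(nat \<Rightarrow> real) \<Rightarrow> (nat \<Rightarrow> nat \<Rightarrow> real) \<Rightarrow> bool" where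
  "Cauchy_a a S \<longleftrightarrow> (\<forall>e>0. \<exists>N. \<forall>m\<ge>N. \<forall>n\<ge>N. d_a a (S m) (S n) < e)"

lemma conv_a_imp_Cauchy_a:
  assumes "\<And>n. S n \<in> Ma a" "conv_a a S s"
  shows "Cauchy_a a S"
  unfolding Cauchy_a_def
proof (intro allI impI)
  fix e :: real assume "e > 0"
  have s: "s \<in> Ma a" "(\<lambda>n. d_a a (S n) s) \<longlonglongrightarrow> 0"
    using assms(2) unfolding conv_a_def by auto
  obtain N where "\<forall>n\<ge>N. norm (d_a a (S n) s - 0) < e / 2"
    using LIMSEQ_D[OF s(2), of "e / 2"] \<open>e > 0\<close> by auto
  then have N: "d_a a (S n) s < e / 2" if "n \<ge> N" for n
    using that by auto
  have "d_a a (S m) (S n) < e" if "m \<ge> N" "n \<ge> N" for m n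
  proof -
    have "d_a a (S m) (S n) \<le> d_a a (S m) s + d_a a (S n) s"
      using d_a_triangle[OF assms(1) s(1) assms(1), of m n] d_a_commute[of a s "S n"] by simp
    then show ?thesis
      using N[OF that(1)] N[OF that(2)] by simp
  qed
  then show "\<exists>N. \<forall>m\<ge>N. \<forall>n\<ge>N. d_a a (S m) (S n) < e"
    by blast
qed

lemma Cauchy_a_imp_Cauchy_coord:
  assumes "\<And>i. a i > 0" "\<And>n. S n \<in> Ma a" "Cauchy_a a S"
  shows "Cauchy (\<lambda>n. S n k)"
proof (rule metric_CauchyI)
  fix e :: real assume "e > 0"
  then have "a k * e > 0"
    using assms(1)[of k] by simp
  then obtain N where N: "\<forall>m\<ge>N. \<forall>n\<ge>N. d_a a (S m) (S n) < a k * e"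
    using assms(3) unfolding Cauchy_a_def by blast
  have "dist (S m k) (S n k) < e" if "m \<ge> N" "n \<ge> N" for m n
  proof -
    have "a k * \<bar>S m k - S n k\<bar> < a k * e"
      using coord_le_d_a[OF assms(2) assms(2), of k m n] N that by fastforce
    then show ?thesis
      using assms(1)[of k] by (simp add: dist_real_def)
  qed
  then show "\<exists>M. \<forall>m\<ge>M. \<forall>n\<ge>M. dist (S m k) (S n k) < e"
    by blast
qed

lemma d_a_le_of_coord_limit:
  assumes "x \<in> Ma a" "\<And>m. y m \<in> Ma a" "\<And>k. (\<lambda>m. y m k) \<longlonglongrightarrow> z k"
    and "\<And>m. m \<ge> N \<Longrightarrow> d_a a x (y m) \<le> e"
  shows "z \<in> Ma a" "d_a a x z \<le> e"
proof -
  have partial: "(\<Sum>k<K. (a k)^2 * (x k - z k)^2) \<le> e^2" for K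
  proof (rule LIMSEQ_le_const2)
    show "(\<lambda>m. \<Sum>k<K. (a k)^2 * (x k - y m k)^2) \<longlonglongrightarrow> (\<Sum>k<K. (a k)^2 * (x k - z k)^2)"
      by (intro tendsto_intros assms(3))
    have "(\<Sum>k<K. (a k)^2 * (x k - y m k)^2) \<le> e^2" if "m \<ge> N" for m
    proof -
      have "(\<Sum>k<K. (a k)^2 * (x k - y m k)^2) \<le> (d_a a x (y m))^2"
        unfolding d_a_def using assms(1,2) by (intro sum_le_norm_a_power2 Ma_diff) auto
      also have "\<dots> \<le> e^2"
        using assms(4)[OF that] d_a_nonneg[OF assms(1,2)] by (intro power_mono) auto
      finally show ?thesis .
    qed
    then show "\<exists>N. \<forall>m\<ge>N. (\<Sum>k<K. (a k)^2 * (x k - y m k)^2) \<le> e^2"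
      by blast
  qed
  have summable: "summable (\<lambda>k. (a k)^2 * (x k - z k)^2)"
    by (rule summableI_nonneg_bounded[OF _ partial]) simp
  then have "(\<lambda>k. x k - (x k - z k)) \<in> Ma a"
    using Ma_diff[OF assms(1), of "\<lambda>k. x k - z k"] by (simp add: Ma_def)
  then show "z \<in> Ma a"
    by simp
  have "0 \<le> e"
    using assms(4)[of N] d_a_nonneg[OF assms(1,2)] by (meson order.trans order_refl)
  moreover have "d_a a x z \<le> sqrt (e^2)"
    unfolding d_a_def norm_a_def by (intro real_sqrt_le_mono suminf_le_const[OF summable partial])
  ultimately show "d_a a x z \<le> e"
    by simp
qed

lemma Cauchy_a_imp_conv_a:
  assumes "\<And>i. a i > 0" "\<And>n. S n \<in> Ma a" "Cauchy_a a S"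
  shows "\<exists>s. conv_a a S s"
proof -
  have "\<forall>k. \<exists>l. (\<lambda>n. S n k) \<longlonglongrightarrow> l"
    using Cauchy_a_imp_Cauchy_coord[OF assms] Cauchy_convergent_iff convergent_def by blast
  then obtain s where s: "\<And>k. (\<lambda>n. S n k) \<longlonglongrightarrow> s k"
    by metis
  have eventually_close: "\<exists>N. \<forall>n\<ge>N. d_a a (S n) s \<le> e" if "e > 0" for e
  proof -
    obtain N where N: "\<forall>m\<ge>N. \<forall>n\<ge>N. d_a a (S m) (S n) < e"
      using assms(3) \<open>e > 0\<close> unfolding Cauchy_a_def by blast
    have "d_a a (S n) s \<le> e" if "n \<ge> N" for n
      using N that
      by (intro d_a_le_of_coord_limit(2)[OF assms(2) assms(2) s, of N]) (auto intro: less_imp_le)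
    then show ?thesis
      by blast
  qed
  obtain N where "\<forall>m\<ge>N. \<forall>n\<ge>N. d_a a (S m) (S n) < 1"
    using assms(3) unfolding Cauchy_a_def by (meson zero_less_one)
  then have sM: "s \<in> Ma a"
    by (intro d_a_le_of_coord_limit(1)[OF assms(2)[of N] assms(2) s, of N 1])
      (auto intro: less_imp_le)
  have "(\<lambda>n. d_a a (S n) s) \<longlonglongrightarrow> 0"
  proof (rule LIMSEQ_I)
    fix r :: real assume "r > 0"
    then obtain N where "\<forall>n\<ge>N. d_a a (S n) s \<le> r / 2"
      using eventually_close[of "r / 2"] by auto
    then show "\<exists>N. \<forall>n\<ge>N. norm (d_a a (S n) s - 0) < r"
      using \<open>r > 0\<close> d_a_nonneg[OF assms(2) sM] by force
  qed
  with sM show ?thesis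
    unfolding conv_a_def by blast
qed

locale Ma_isometry =
  fixes a :: "nat \<Rightarrow> real" and E :: "(nat \<Rightarrow> real) set"
    and f :: "(nat \<Rightarrow> real) \<Rightarrow> nat \<Rightarrow> real" and p :: "nat \<Rightarrow> real"
  assumes a_pos: "\<And>i. a i > 0"
    and subset_Ma: "E \<subseteq> Ma a" and image_subset_Ma: "f ` E \<subseteq> Ma a"
    and isometry: "\<And>x y. x \<in> E \<Longrightarrow> y \<in> E \<Longrightarrow> d_a a (f x) (f y) = d_a a x y"
    and base_in: "p \<in> E"
begin

lemma inner_a_image_diff:
  assumes "z \<in> E" "w \<in> E"
  shows "inner_a a (\<lambda>k. f z k - f p k) (\<lambda>k. f w k - f p k)
       = inner_a a (\<lambda>k. z k - p k) (\<lambda>k. w k - p k)"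
proof -
  have Ma: "z \<in> Ma a" "w \<in> Ma a" "p \<in> Ma a" "f z \<in> Ma a" "f w \<in> Ma a" "f p \<in> Ma a"
    using assms base_in subset_Ma image_subset_Ma by auto
  have diff_diff: "d_a a (\<lambda>k. u k - v k) (\<lambda>k. u' k - v k) = d_a a u u'" for u u' v
    unfolding d_a_def by simp
  show ?thesis
    using assms base_in
    by (simp add: inner_a_polarization Ma_diff Ma diff_diff isometry flip: d_a_def)
qed

lemma norm_a_image_sum:
  assumes "finite I" "\<And>i. i \<in> I \<Longrightarrow> z i \<in> E"
  shows "norm_a a (\<lambda>k. \<Sum>i\<in>I. c i * (f (z i) k - f p k))
       = norm_a a (\<lambda>k. \<Sum>i\<in>I. c i * (z i k - p k))"
proof -
  have "f (z i) \<in> Ma a" "z i \<in> Ma a" if "i \<in> I" for i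
    using that assms(2) subset_Ma image_subset_Ma by auto
  moreover have "f p \<in> Ma a" "p \<in> Ma a"
    using base_in subset_Ma image_subset_Ma by auto
  ultimately show ?thesis
    using assms
    by (simp add: norm_a_eq_sqrt_inner_a Ma_diff inner_a_image_diff
        inner_a_sum_sum[OF assms(1), of "\<lambda>i k. f (z i) k - f p k"]
        inner_a_sum_sum[OF assms(1), of "\<lambda>i k. z i k - p k"])
qed

lemma d_a_image_psum:
  assumes "\<And>i. x i \<in> E" "\<And>i. y i \<in> E"
  shows "d_a a (psum \<alpha> (\<lambda>i. f (x i)) (f p) m) (psum \<beta> (\<lambda>i. f (y i)) (f p) n)
       = d_a a (psum \<alpha> x p m) (psum \<beta> y p n)"
proof -
  define I where "I = {..<m} <+> {..<n}"
  define z where "z = case_sum x y"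
  define c where "c = case_sum \<alpha> (\<lambda>i. - \<beta> i)"
  have z: "z j \<in> E" for j
    unfolding z_def using assms by (cases j) auto
  have split: "(\<lambda>k. psum \<alpha> u q m k - psum \<beta> v q n k)
      = (\<lambda>k. \<Sum>j\<in>I. c j * (case_sum u v j k - q k))" for u v q
    unfolding psum_def I_def c_def by (rule ext, subst sum.Plus) (auto simp: sum_negf)
  moreover have "case_sum (\<lambda>i. f (x i)) (\<lambda>i. f (y i)) = (\<lambda>j. f (z j))"
    unfolding z_def by (rule ext) (simp split: sum.split)
  ultimately show ?thesis
    unfolding d_a_def using norm_a_image_sum[of I z c] z by (simp add: I_def flip: z_def)
qed

lemma psum_in_Ma_image:
  assumes "\<And>i. x i \<in> E"
  shows "psum \<alpha> x p n \<in> Ma a" "psum \<alpha> (\<lambda>i. f (x i)) (f p) n \<in> Ma a"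
  using assms base_in subset_Ma image_subset_Ma by (auto intro!: psum_in_Ma)

lemma ex_conv_a_image_psum_iff:
  assumes "\<And>i. x i \<in> E"
  shows "(\<exists>t. conv_a a (psum \<alpha> (\<lambda>i. f (x i)) (f p)) t) \<longleftrightarrow> (\<exists>s. conv_a a (psum \<alpha> x p) s)"
proof -
  have "Cauchy_a a (psum \<alpha> (\<lambda>i. f (x i)) (f p)) \<longleftrightarrow> Cauchy_a a (psum \<alpha> x p)"
    unfolding Cauchy_a_def d_a_image_psum[OF assms assms] ..
  then show ?thesis
    using psum_in_Ma_image[where x=x, OF assms] a_pos by (metis Cauchy_a_imp_conv_a conv_a_imp_Cauchy_a)
qed

lemma conv_a_image_psum_unique:
  assumes "\<And>i. x i \<in> E" "\<And>i. y i \<in> E"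
    and "conv_a a (psum \<alpha> x p) s" "conv_a a (psum \<beta> y p) s"
    and "conv_a a (psum \<alpha> (\<lambda>i. f (x i)) (f p)) t" "conv_a a (psum \<beta> (\<lambda>i. f (y i)) (f p)) t'"
  shows "t = t'"
proof -
  note Ma = psum_in_Ma_image[where x=x, OF assms(1)] psum_in_Ma_image[where x=y, OF assms(2)]
  have "(\<lambda>n. d_a a (psum \<alpha> (\<lambda>i. f (x i)) (f p) n) (psum \<beta> (\<lambda>i. f (y i)) (f p) n))
          \<longlonglongrightarrow> d_a a t t'"
    by (rule tendsto_d_a[OF Ma(2) Ma(4) assms(5,6)])
  moreover have "(\<lambda>n. d_a a (psum \<alpha> x p n) (psum \<beta> y p n)) \<longlonglongrightarrow> d_a a s s"
    by (rule tendsto_d_a[OF Ma(1) Ma(3) assms(3,4)])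
  ultimately have "d_a a t t' = 0"
    unfolding d_a_image_psum[OF assms(1,2)] d_a_self by (rule LIMSEQ_unique)
  then show ?thesis
    using a_pos assms(5,6) unfolding conv_a_def by (blast intro: d_a_eq_0_imp_eq)
qed

lemma Fmap_eq:
  assumes "\<And>i. x i \<in> E" "conv_a a (psum \<alpha> x p) s" "conv_a a (psum \<alpha> (\<lambda>i. f (x i)) (f p)) t"
  shows "Fmap a f E p (\<lambda>k. p k + s k) = (\<lambda>k. f p k + t k)"
  unfolding Fmap_def
proof (rule the_equality)
  show "\<exists>x' \<alpha>' s' t'. (\<forall>i. x' i \<in> E) \<and> conv_a a (psum \<alpha>' x' p) s'
      \<and> (\<lambda>k. p k + s k) = (\<lambda>k. p k + s' k)
      \<and> conv_a a (psum \<alpha>' (\<lambda>i. f (x' i)) (f p)) t' \<and> (\<lambda>k. f p k + t k) = (\<lambda>k. f p k + t' k)"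
    using assms by blast
next
  fix z
  assume "\<exists>x' \<alpha>' s' t'. (\<forall>i. x' i \<in> E) \<and> conv_a a (psum \<alpha>' x' p) s'
      \<and> (\<lambda>k. p k + s k) = (\<lambda>k. p k + s' k)
      \<and> conv_a a (psum \<alpha>' (\<lambda>i. f (x' i)) (f p)) t' \<and> z = (\<lambda>k. f p k + t' k)"
  then obtain x' \<alpha>' s' t' where x': "\<And>i. x' i \<in> E" and s': "conv_a a (psum \<alpha>' x' p) s'"
    and "(\<lambda>k. p k + s k) = (\<lambda>k. p k + s' k)"
    and t': "conv_a a (psum \<alpha>' (\<lambda>i. f (x' i)) (f p)) t'" and z: "z = (\<lambda>k. f p k + t' k)"
    by blast
  then have "s' = s"
    by (simp add: fun_eq_iff)
  with assms x' s' t' have "t = t'"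
    by (intro conv_a_image_psum_unique) auto
  with z show "z = (\<lambda>k. f p k + t k)"
    by simp
qed

lemma Fmap_image_GS_subset: "Fmap a f E p ` GS a E p \<subseteq> GS a (f ` E) (f p)"
proof
  fix w assume "w \<in> Fmap a f E p ` GS a E p"
  then obtain x \<alpha> s where x: "\<And>i. x i \<in> E" and s: "conv_a a (psum \<alpha> x p) s"
    and w: "w = Fmap a f E p (\<lambda>k. p k + s k)"
    unfolding GS_def by blast
  obtain t where t: "conv_a a (psum \<alpha> (\<lambda>i. f (x i)) (f p)) t"
    using ex_conv_a_image_psum_iff[where x=x, OF x] s by blast
  have "w = (\<lambda>k. f p k + t k)"
    using Fmap_eq[OF x s t] w by simp
  moreover have "(\<lambda>k. f p k + t k) \<in> Ma a"
    using t base_in image_subset_Ma unfolding conv_a_def by (blast intro: Ma_add)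
  ultimately show "w \<in> GS a (f ` E) (f p)"
    unfolding GS_def using x t by (auto intro!: exI[of _ "\<lambda>i. f (x i)"])
qed

lemma GS_image_subset_Fmap_image: "GS a (f ` E) (f p) \<subseteq> Fmap a f E p ` GS a E p"
proof
  fix w assume "w \<in> GS a (f ` E) (f p)"
  then obtain y \<alpha> t where y: "\<And>i. y i \<in> f ` E" and t: "conv_a a (psum \<alpha> y (f p)) t"
    and w: "w = (\<lambda>k. f p k + t k)"
    unfolding GS_def by blast
  define x where "x i = inv_into E f (y i)" for i
  have x: "x i \<in> E" for i
    using y unfolding x_def by (rule inv_into_into)
  have fx: "(\<lambda>i. f (x i)) = y"
    using y unfolding x_def by (simp add: f_inv_into_f fun_eq_iff)
  obtain s where s: "conv_a a (psum \<alpha> x p) s"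
    using ex_conv_a_image_psum_iff[where x=x, OF x] t fx by blast
  have "(\<lambda>k. p k + s k) \<in> Ma a"
    using s base_in subset_Ma unfolding conv_a_def by (blast intro: Ma_add)
  then have "(\<lambda>k. p k + s k) \<in> GS a E p"
    unfolding GS_def using x s by blast
  moreover have "Fmap a f E p (\<lambda>k. p k + s k) = w"
    using Fmap_eq[OF x s] t fx w by simp
  ultimately show "w \<in> Fmap a f E p ` GS a E p"
    by blast
qed

lemma Fmap_image_GS: "Fmap a f E p ` GS a E p = GS a (f ` E) (f p)"
  using Fmap_image_GS_subset GS_image_subset_Fmap_image by (rule subset_antisym)

end

theorem theorem3p16:
  fixes a :: "nat \<Rightarrow> real" and E1 E2 :: "(nat \<Rightarrow> real) set"
    and f :: "(nat \<Rightarrow> real) \<Rightarrow> (nat \<Rightarrow> real)" and p :: "nat \<Rightarrow> real"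
  assumes apos: "\<And>i. a i > 0"
    and asum: "summable (\<lambda>i. (a i)^2)"
    and E1sub: "E1 \<subseteq> Ma a" and E2sub: "E2 \<subseteq> Ma a"
    and E1ne: "E1 \<noteq> {}" and E2ne: "E2 \<noteq> {}"
    and E1bd: "bounded_a a E1" and E2bd: "bounded_a a E2"
    and surj: "f ` E1 = E2"
    and isom: "\<And>x y. x \<in> E1 \<Longrightarrow> y \<in> E1 \<Longrightarrow> d_a a (f x) (f y) = d_a a x y"
    and pE1: "p \<in> E1"
  shows "Fmap a f E1 p ` GS a E1 p = GS a E2 (f p)"
proof -
  interpret Ma_isometry a E1 f p
    using apos E1sub E2sub surj isom pE1 by unfold_locales auto
  show ?thesis
    using Fmap_image_GS surj by simp
qed

end
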